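(* Let $n$ be a prime and $k$ an integer with $2\le k<n/2$, and let $N=\binom{n}{k}/n$. Regard each $\underline{\mathbf{C}}_{\underline{g}}$ as the set of $k$-subsets of $[n]$ formed by the underlying sets of its vectors. Then the family $\{\underline{\mathbf{C}}_{\underline{g}}:\underline{g}\in\underline{\mathbf{G}}_{\mathrm{tot}}\}$ has exactly $N$ distinct members; any two of them are either equal or disjoint; and their union is the set $\binom{[n]}{k}$ of all $k$-subsets of $[n]$. Consequently, choosing generators $\underline{g}_1,\dots,\underline{g}_N\in\underline{\mathbf{G}}_{\mathrm{tot}}$ with pairwise distinct sets $\underline{\mathbf{C}}_{\underline{g}_i}$, the corresponding cycles $\boldsymbol{\mathcal{S}}_{\underline{g}_1},\dots,\boldsymbol{\mathcal{S}}_{\underline{g}_N}$ are Hamiltonian (Berge) cycles of $K_n^k$ whose hyperedge sets partition $\binom{[n]}{k}$, i.e. they form a Hamiltonian decomposition of $K_n^k$.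
   Context: $[n]=\{1,\dots,n\}$; reduction mod $n$ is entrywise with representatives in $[n]$, and $\underline{1}$ is the all-ones vector of length $k$. For an integer vector $\underline{g}=[g_1,\dots,g_k]$ with $g_i\ge1$ for $i\in[k-1]$ and $g_1+\dots+g_{k-1}\le n-1$, the representative vector is $\underline{r}_{\underline{g}}=[1,1+g_1,1+g_1+g_2,\dots,1+g_1+\cdots+g_{k-1}]$ and $\underline{\mathbf{C}}_{\underline{g}}=\{\underline{r}_{\underline{g}}+p\cdot\underline{1}\ (\mathrm{mod}\ n):p=0,\dots,n-1\}$. The generator set: let $\sigma_{\min}=k-1$ and $\sigma_{\max}=n-\lceil n/k\rceil$. For $\sigma\in[\sigma_{\min},\sigma_{\max}]$ let $\underline{\mathbf{S}}_\sigma=\{[c_1,\dots,c_{k-1}]\in\mathbb{Z}^{k-1}:\sum_i c_i=\sigma,\ 1\le c_i\le n-\sigma\}$ and $\underline{\mathbf{G}}_\sigma=\{[c_1,\dots,c_{k-1},m]:[c_1,\dots,c_{k-1}]\in\underline{\mathbf{S}}_\sigma\}$ where $m=-\sigma$ if $\sigma\le\lfloor n/2\rfloor$ and $m=n-\sigma$ otherwise. Finally $\underline{\mathbf{G}}_{\mathrm{tot}}=\bigcup_{\sigma=\sigma_{\min}}^{\sigma_{\max}}\underline{\mathbf{G}}_\sigma$. For $\underline{g}\in\underline{\mathbf{G}}_{\mathrm{tot}}$, the cycle $\boldsymbol{\mathcal{S}}_{\underline{g}}$ is $(v_0,\mathcal{E}_0,v_1,\mathcal{E}_1,\dots,v_{n-1},\mathcal{E}_{n-1},v_0)$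 with $v_p=1+p\,g_1\pmod n$ and $\mathcal{E}_p$ the set of entries of $\underline{r}_{\underline{g}}+p\,g_1\cdot\underline{1}\pmod n$. The complete $k$-uniform hypergraph $K_n^k$ has vertex set $[n]$ and every $k$-subset of $[n]$ as a hyperedge. A (Berge) Hamiltonian cycle is a sequence $(v_1,\mathcal{E}_1,v_2,\dots,v_n,\mathcal{E}_n,v_1)$ with $v_1,\dots,v_n$ a permutation of $[n]$, $\mathcal{E}_1,\dots,\mathcal{E}_n$ distinct hyperedges, and $v_i,v_{i+1}\in\mathcal{E}_i$ (indices mod $n$). A Hamiltonian decomposition of $K_n^k$ is a partition of its hyperedge set into $N$ sets each of which is the hyperedge set of a Hamiltonian cycle. *)

theory Defs
  imports Complex_Main "HOL-Computational_Algebra.Primes"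
begin

text \<open>Vectors of length k are integer lists; vertices of K_n^k are the integers 1..n.\<close>

definition modn :: "nat \<Rightarrow> int \<Rightarrow> int" where
  "modn n x = ((x - 1) mod int n) + 1"

definition rep_vec :: "int list \<Rightarrow> int list" where
  "rep_vec g = map (\<lambda>i. 1 + sum_list (take i g)) [0..<length g]"

definition Cvecs :: "nat \<Rightarrow> int list \<Rightarrow> int list set" where
  "Cvecs n g = {map (\<lambda>x. modn n (x + int p)) (rep_vec g) | p. p < n}"

definition Csets :: "nat \<Rightarrow> int list \<Rightarrow> int set set" where
  "Csets n g = set ` Cvecs n g"

definition sigma_max :: "nat \<Rightarrow> nat \<Rightarrow> int" where
  "sigma_max n k = int n - ceiling (real n / real k)"

definition S_sigma :: "nat \<Rightarrow> nat \<Rightarrow> int \<Rightarrow> int list set" where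
  "S_sigma n k \<sigma> = {c. length c = k - 1 \<and> sum_list c = \<sigma> \<and>
                        (\<forall>x \<in> set c. 1 \<le> x \<and> x \<le> int n - \<sigma>)}"

definition m_sigma :: "nat \<Rightarrow> int \<Rightarrow> int" where
  "m_sigma n \<sigma> = (if \<sigma> \<le> int (n div 2) then - \<sigma> else int n - \<sigma>)"

definition G_sigma :: "nat \<Rightarrow> nat \<Rightarrow> int \<Rightarrow> int list set" where
  "G_sigma n k \<sigma> = {c @ [m_sigma n \<sigma>] | c. c \<in> S_sigma n k \<sigma>}"

definition G_tot :: "nat \<Rightarrow> nat \<Rightarrow> int list set" where
  "G_tot n k = (\<Union>\<sigma> \<in> {int k - 1 .. sigma_max n k}. G_sigma n k \<sigma>)"

definition cyc_v :: "nat \<Rightarrow> int list \<Rightarrow> nat \<Rightarrow> int" where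
  "cyc_v n g p = modn n (1 + int p * hd g)"

definition cyc_E :: "nat \<Rightarrow> int list \<Rightarrow> nat \<Rightarrow> int set" where
  "cyc_E n g p = set (map (\<lambda>x. modn n (x + int p * hd g)) (rep_vec g))"

definition hyperedges :: "nat \<Rightarrow> nat \<Rightarrow> int set set" where
  "hyperedges n k = {E. E \<subseteq> {1..int n} \<and> card E = k}"

text \<open>Berge Hamiltonian cycle (v_0,E_0,...,v_(n-1),E_(n-1),v_0) in K_n^k.\<close>
definition berge_ham_cycle :: "nat \<Rightarrow> nat \<Rightarrow> (nat \<Rightarrow> int) \<Rightarrow> (nat \<Rightarrow> int set) \<Rightarrow> bool" where
  "berge_ham_cycle n k v E \<longleftrightarrow>
     bij_betw v {0..<n} {1..int n} \<and> inj_on E {0..<n} \<and>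
     (\<forall>i<n. E i \<in> hyperedges n k \<and> v i \<in> E i \<and> v ((i + 1) mod n) \<in> E i)"

end

theory Submission
  imports Defs "HOL-Number_Theory.Cong"
begin

text \<open>The rotations x \<mapsto> x + s (mod n) act on the k-subsets of [n], and each C_g is the orbit
  of the set of entries of r_g. For prime n every orbit of a proper nonempty subset has exactly n
  members: a subset fixed by a nontrivial rotation is fixed by all of them. Conversely, choose in a
  given orbit a member B containing 1 whose maximum is as small as possible; rotating any element of
  B to 1 shows that every gap between consecutive elements of B is at most n + 1 - max B, which is
  exactly what makes the list of gaps of B a generator in G_tot with r_g = B. So the C_g are the
  orbits, and they partition the hyperedges into binom(n,k)/n classes. Finally g_1 is invertible
  mod n, so the hyperedges E_p of the cycle S_g run through C_g and its vertices 1 + p g_1 run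
  through [n], each exactly once; both 1 + p g_1 and 1 + (p+1) g_1 lie in E_p.\<close>

section \<open>Reduction mod n and rotations\<close>

lemma modn_in_range:
  assumes "0 < n" shows "modn n x \<in> {1..int n}"
proof -
  have "0 \<le> (x - 1) mod int n" "(x - 1) mod int n < int n"
    using assms by simp_all
  then show ?thesis unfolding modn_def by simp
qed

lemma modn_id: "y \<in> {1..int n} \<Longrightarrow> modn n y = y"
  unfolding modn_def by auto

lemma modn_eq_iff: "modn n x = modn n y \<longleftrightarrow> int n dvd x - y"
proof -
  have "modn n x = modn n y \<longleftrightarrow> (x - 1) mod int n = (y - 1) mod int n"
    unfolding modn_def by simp
  also have "\<dots> \<longleftrightarrow> int n dvd x - y"
    by (simp add: mod_eq_dvd_iff)
  finally show ?thesis .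
qed

lemma modn_add: "modn n (modn n x + s) = modn n (x + s)"
proof -
  have "int n dvd (x - 1) mod int n - (x - 1)"
    by (simp flip: mod_eq_dvd_iff)
  then show ?thesis
    unfolding modn_eq_iff by (simp add: modn_def algebra_simps)
qed

lemma int_dvd_diff_imp_eq: "p < n \<Longrightarrow> q < n \<Longrightarrow> int n dvd int p - int q \<Longrightarrow> p = q"
  by (auto simp flip: mod_eq_dvd_iff)

lemma dvd_mult_diff_imp_eq:
  assumes "prime n" "\<not> int n dvd h" "p < n" "q < n" "int n dvd int p * h - int q * h"
  shows "p = q"
proof -
  have "int n dvd (int p - int q) * h"
    using assms(5) by (simp add: algebra_simps)
  then have "int n dvd int p - int q"
    using assms(1,2) by (simp add: prime_dvd_mult_iff)
  then show ?thesis
    using assms(3,4) int_dvd_diff_imp_eq by blast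
qed

definition rot :: "nat \<Rightarrow> int \<Rightarrow> int set \<Rightarrow> int set" where
  "rot n s A = (\<lambda>x. modn n (x + s)) ` A"

lemma rot_subset: "0 < n \<Longrightarrow> rot n s A \<subseteq> {1..int n}"
  unfolding rot_def using modn_in_range by blast

lemma rot_rot: "rot n s (rot n t A) = rot n (t + s) A"
  unfolding rot_def image_image by (simp add: modn_add add.assoc)

lemma rot_0: assumes "A \<subseteq> {1..int n}" shows "rot n 0 A = A"
proof -
  have "(\<lambda>x. modn n (x + 0)) ` A = id ` A"
    using assms modn_id by (intro image_cong) auto
  then show ?thesis unfolding rot_def by simp
qed

lemma rot_cong: "int n dvd s - t \<Longrightarrow> rot n s A = rot n t A"
  unfolding rot_def by (intro image_cong refl) (simp add: modn_eq_iff)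

lemma inj_on_modn_shift: "inj_on (\<lambda>x. modn n (x + s)) {1..int n}"
proof (rule inj_onI)
  fix x y assume "x \<in> {1..int n}" "y \<in> {1..int n}" "modn n (x + s) = modn n (y + s)"
  then have "modn n x = modn n y" by (simp add: modn_eq_iff)
  then show "x = y" using modn_id \<open>x \<in> _\<close> \<open>y \<in> _\<close> by simp
qed

lemma card_rot: "A \<subseteq> {1..int n} \<Longrightarrow> card (rot n s A) = card A"
  unfolding rot_def by (rule card_image, rule inj_on_subset[OF inj_on_modn_shift])

lemma rot_hyperedges: "0 < n \<Longrightarrow> A \<in> hyperedges n k \<Longrightarrow> rot n s A \<in> hyperedges n k"
  unfolding hyperedges_def using rot_subset card_rot by auto

lemma rot_fixed_iterate:
  assumes "rot n s A = A" "A \<subseteq> {1..int n}"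
  shows "rot n (int j * s) A = A"
proof (induction j)
  case 0
  show ?case using rot_0[OF assms(2)] by simp
next
  case (Suc j)
  have "rot n (int (Suc j) * s) A = rot n s (rot n (int j * s) A)"
    by (simp add: rot_rot algebra_simps)
  with Suc assms(1) show ?case by simp
qed

lemma rot_fixed_imp_dvd:
  assumes "prime n" "A \<subseteq> {1..int n}" "A \<noteq> {}" "A \<noteq> {1..int n}" "rot n s A = A"
  shows "int n dvd s"
proof (rule ccontr)
  assume "\<not> int n dvd s"
  moreover have "prime (int n)"
    using assms(1) by simp
  ultimately have "coprime s (int n)"
    using prime_imp_coprime coprime_commute by blast
  then obtain u where "[s * u = 1] (mod int n)"
    using cong_solve_coprime_int by blast
  then have u: "int n dvd s * u - 1"
    by (simp add: cong_iff_dvd_diff)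
  obtain a x where a: "a \<in> A" and x: "x \<in> {1..int n}" "x \<notin> A"
    using assms(2-4) by blast
  \<comment> \<open>a rotation by a multiple of s that is congruent to x - a carries a \<in> A to x \<notin> A\<close>
  define j where "j = nat ((x - a) * u mod int n)"
  have n0: "0 < n" using prime_gt_0_nat[OF assms(1)] .
  have "int j = (x - a) * u mod int n"
    using n0 by (simp add: j_def)
  then have "int n dvd int j - (x - a) * u"
    by (simp flip: mod_eq_dvd_iff)
  then have "int n dvd (int j - (x - a) * u) * s + (x - a) * (s * u - 1)"
    using u by (simp add: dvd_add dvd_mult2 dvd_mult)
  moreover have "(int j - (x - a) * u) * s + (x - a) * (s * u - 1) = (a + int j * s) - x"
    by (simp add: algebra_simps)
  ultimately have "int n dvd (a + int j * s) - x"
    by simp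
  then have "modn n (a + int j * s) = x"
    using modn_eq_iff[of n "a + int j * s" x] modn_id[OF x(1)] by simp
  moreover have "modn n (a + int j * s) \<in> rot n (int j * s) A"
    unfolding rot_def using a by blast
  ultimately show False
    using rot_fixed_iterate[OF assms(5,2)] x(2) by simp
qed

lemma rot_eq_imp_dvd:
  assumes "prime n" "A \<subseteq> {1..int n}" "A \<noteq> {}" "A \<noteq> {1..int n}" "rot n s A = rot n t A"
  shows "int n dvd s - t"
proof -
  have "rot n (s - t) A = rot n (- t) (rot n s A)"
    by (simp add: rot_rot)
  also have "\<dots> = rot n (- t) (rot n t A)"
    using assms(5) by simp
  also have "\<dots> = rot n 0 A"
    by (simp add: rot_rot)
  also have "\<dots> = A"
    using rot_0[OF assms(2)] .
  finally show ?thesis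
    using rot_fixed_imp_dvd[OF assms(1-4)] by blast
qed

definition rot_orbit :: "nat \<Rightarrow> int set \<Rightarrow> int set set" where
  "rot_orbit n A = (\<lambda>p. rot n (int p) A) ` {..<n}"

lemma rot_orbit_eq_range:
  assumes "0 < n" shows "rot_orbit n A = range (\<lambda>s. rot n s A)"
proof -
  have "rot n s A \<in> rot_orbit n A" for s
  proof -
    have "rot n s A = rot n (int (nat (s mod int n))) A"
      using assms by (intro rot_cong) (simp flip: mod_eq_dvd_iff)
    moreover have "nat (s mod int n) < n"
      using assms by (simp add: nat_less_iff)
    ultimately show ?thesis unfolding rot_orbit_def by blast
  qed
  then show ?thesis unfolding rot_orbit_def by blast
qed

lemma rot_orbit_rot:
  assumes "0 < n" shows "rot_orbit n (rot n t A) = rot_orbit n A"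
proof -
  have "rot n s A = rot n (t + (s - t)) A" for s
    by simp
  then have "range (\<lambda>s. rot n (t + s) A) = range (\<lambda>s. rot n s A)"
    by blast
  then show ?thesis
    unfolding rot_orbit_eq_range[OF assms] by (simp add: rot_rot)
qed

lemma rot_orbit_eq_or_disjoint:
  assumes "0 < n"
  shows "rot_orbit n A = rot_orbit n B \<or> rot_orbit n A \<inter> rot_orbit n B = {}"
proof (rule disjCI)
  assume "rot_orbit n A \<inter> rot_orbit n B \<noteq> {}"
  then obtain s t where "rot n s A = rot n t B"
    unfolding rot_orbit_eq_range[OF assms] by blast
  then show "rot_orbit n A = rot_orbit n B"
    by (metis rot_orbit_rot[OF assms])
qed

lemma card_rot_orbit:
  assumes "prime n" "A \<subseteq> {1..int n}" "A \<noteq> {}" "A \<noteq> {1..int n}"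
  shows "card (rot_orbit n A) = n"
proof -
  have "inj_on (\<lambda>p. rot n (int p) A) {..<n}"
  proof (rule inj_onI)
    fix p q assume "p \<in> {..<n}" "q \<in> {..<n}" "rot n (int p) A = rot n (int q) A"
    then show "p = q"
      using rot_eq_imp_dvd[OF assms] int_dvd_diff_imp_eq by blast
  qed
  then show ?thesis unfolding rot_orbit_def by (simp add: card_image)
qed

lemma Csets_eq_rot_orbit: "Csets n g = rot_orbit n (set (rep_vec g))"
proof -
  have "Csets n g = {set (map (\<lambda>x. modn n (x + int p)) (rep_vec g)) | p. p < n}"
    unfolding Csets_def Cvecs_def by blast
  then show ?thesis
    unfolding rot_orbit_def rot_def by auto
qed

lemma cyc_E_eq_rot: "cyc_E n g p = rot n (int p * hd g) (set (rep_vec g))"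
  unfolding cyc_E_def rot_def by simp

section \<open>Generators and their representative sets\<close>

lemma mem_G_tot_iff:
  "g \<in> G_tot n k \<longleftrightarrow> (\<exists>c \<sigma>. g = c @ [m_sigma n \<sigma>] \<and> length c = k - 1 \<and> sum_list c = \<sigma>
     \<and> (\<forall>x\<in>set c. 1 \<le> x \<and> x \<le> int n - \<sigma>) \<and> int k - 1 \<le> \<sigma> \<and> \<sigma> \<le> sigma_max n k)"
  unfolding G_tot_def G_sigma_def S_sigma_def by auto

lemma le_sigma_max_iff:
  assumes "0 < k" shows "\<sigma> \<le> sigma_max n k \<longleftrightarrow> int n \<le> int k * (int n - \<sigma>)"
proof -
  have "\<sigma> \<le> sigma_max n k \<longleftrightarrow> \<lceil>real n / real k\<rceil> \<le> int n - \<sigma>"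
    unfolding sigma_max_def by linarith
  also have "\<dots> \<longleftrightarrow> real n / real k \<le> of_int (int n - \<sigma>)"
    by (rule ceiling_le_iff)
  also have "\<dots> \<longleftrightarrow> real n \<le> real k * of_int (int n - \<sigma>)"
    using assms by (simp add: divide_le_eq mult.commute)
  also have "\<dots> \<longleftrightarrow> int n \<le> int k * (int n - \<sigma>)"
    by (metis of_int_le_iff of_int_mult of_int_of_nat_eq)
  finally show ?thesis .
qed

lemma rep_vec_snoc_nth:
  "i \<le> length c \<Longrightarrow> rep_vec (c @ [m]) ! i = 1 + sum_list (take i c)"
  unfolding rep_vec_def by (simp add: nth_append del: upt_Suc)

lemma set_rep_vec_snoc:
  "set (rep_vec (c @ [m])) = (\<lambda>i. 1 + sum_list (take i c)) ` {..length c}"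
proof -
  have "{0..<length (c @ [m])} = {..length c}"
    by auto
  moreover have "take i (c @ [m]) = take i c" if "i \<in> {..length c}" for i
    using that by simp
  ultimately show ?thesis
    unfolding rep_vec_def set_map set_upt by (intro image_cong) auto
qed

lemma sum_list_take_strict_mono:
  fixes c :: "int list"
  assumes "\<forall>x\<in>set c. 0 < x" "i < j" "j \<le> length c"
  shows "sum_list (take i c) < sum_list (take j c)"
  using assms(2,3)
proof (induction j)
  case 0
  then show ?case by simp
next
  case (Suc j)
  have "sum_list (take (Suc j) c) = sum_list (take j c) + c ! j"
    using Suc.prems by (simp add: take_Suc_conv_app_nth)
  moreover have "0 < c ! j"
    using assms(1) Suc.prems by simp
  ultimately show ?case
    using Suc by (cases "i = j") auto
qed

lemma partial_sums_image:
  fixes c :: "int list"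
  assumes "\<forall>x\<in>set c. 0 < x"
  shows "card ((\<lambda>i. 1 + sum_list (take i c)) ` {..length c}) = Suc (length c)"
    and "(\<lambda>i. 1 + sum_list (take i c)) ` {..length c} \<subseteq> {1..1 + sum_list c}"
proof -
  let ?f = "\<lambda>i. 1 + sum_list (take i c)"
  have mono: "?f i < ?f j" if "i < j" "j \<le> length c" for i j
    using sum_list_take_strict_mono[OF assms that] by simp
  have "inj_on ?f {..length c}"
    by (rule linorder_inj_onI) (metis atMost_iff less_irrefl mono, linarith)
  then show "card (?f ` {..length c}) = Suc (length c)"
    by (simp add: card_image)
  have "?f 0 \<le> ?f i \<and> ?f i \<le> ?f (length c)" if "i \<le> length c" for i
    using that mono[of 0 i] mono[of i "length c"] by (cases "i = 0"; cases "i = length c") auto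
  then show "?f ` {..length c} \<subseteq> {1..1 + sum_list c}"
    by fastforce
qed

lemma G_tot_rep_vec:
  assumes "g \<in> G_tot n k" "2 \<le> k"
  shows "set (rep_vec g) \<in> hyperedges n k" "1 \<in> set (rep_vec g)" "1 + hd g \<in> set (rep_vec g)"
    and "0 < hd g" "hd g < int n"
proof -
  obtain c \<sigma> where g: "g = c @ [m_sigma n \<sigma>]" and lc: "length c = k - 1"
    and sc: "sum_list c = \<sigma>" and ce: "\<forall>x\<in>set c. 1 \<le> x \<and> x \<le> int n - \<sigma>"
    and \<sigma>: "int k - 1 \<le> \<sigma>"
    using assms(1) mem_G_tot_iff by blast
  have "c \<noteq> []"
    using lc assms(2) by auto
  then have hd: "hd g = hd c" "1 \<le> hd c" "hd c \<le> int n - \<sigma>"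
    using g ce by auto
  have R: "set (rep_vec g) = (\<lambda>i. 1 + sum_list (take i c)) ` {..length c}"
    using g set_rep_vec_snoc by simp
  have pos: "\<forall>x\<in>set c. 0 < x"
    using ce by auto
  show "set (rep_vec g) \<in> hyperedges n k"
    using partial_sums_image[OF pos] lc assms(2) sc hd \<sigma>
    unfolding hyperedges_def R by force
  show "1 \<in> set (rep_vec g)"
    unfolding R by force
  have "take 1 c = [hd c]"
    using \<open>c \<noteq> []\<close> by (cases c) auto
  moreover have "1 \<in> {..length c}"
    using \<open>c \<noteq> []\<close> by (simp add: Suc_le_eq)
  ultimately show "1 + hd g \<in> set (rep_vec g)"
    unfolding R hd(1) by (force intro: image_eqI[where x = 1])
  show "0 < hd g" "hd g < int n"
    using hd \<sigma> assms(2) by auto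
qed

lemma sum_list_take_diffs:
  fixes xs :: "int list"
  assumes "i \<le> length xs - 1"
  shows "sum_list (take i (map (\<lambda>j. xs ! Suc j - xs ! j) [0..<length xs - 1])) = xs ! i - xs ! 0"
proof -
  have "take i (map (\<lambda>j. xs ! Suc j - xs ! j) [0..<length xs - 1])
        = map (\<lambda>j. xs ! Suc j - xs ! j) [0..<i]"
    using assms by (simp add: take_map)
  then show ?thesis
    by (simp add: interv_sum_list_conv_sum_set_nat atLeast0LessThan sum_lessThan_telescope)
qed

lemma rep_vec_diffs:
  fixes xs :: "int list"
  assumes "xs \<noteq> []" "xs ! 0 = 1"
  shows "rep_vec (map (\<lambda>j. xs ! Suc j - xs ! j) [0..<length xs - 1] @ [m]) = xs"
proof (rule nth_equalityI)
  show "length (rep_vec (map (\<lambda>j. xs ! Suc j - xs ! j) [0..<length xs - 1] @ [m])) = length xs"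
    using assms(1) by (simp add: rep_vec_def)
  fix i assume "i < length (rep_vec (map (\<lambda>j. xs ! Suc j - xs ! j) [0..<length xs - 1] @ [m]))"
  then have "i \<le> length xs - 1"
    using assms(1) by (simp add: rep_vec_def)
  then show "rep_vec (map (\<lambda>j. xs ! Suc j - xs ! j) [0..<length xs - 1] @ [m]) ! i = xs ! i"
    using assms(2) sum_list_take_diffs[of i xs] by (simp add: rep_vec_snoc_nth)
qed

lemma G_tot_of_gap_list:
  fixes xs :: "int list"
  assumes k: "2 \<le> k" "length xs = k" and first: "xs ! 0 = 1"
    and gaps: "\<And>i. i < k - 1 \<Longrightarrow>
                 1 \<le> xs ! Suc i - xs ! i \<and> xs ! Suc i - xs ! i \<le> int n + 1 - xs ! (k - 1)"
  shows "\<exists>g\<in>G_tot n k. rep_vec g = xs"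
proof -
  define d where "d i = xs ! Suc i - xs ! i" for i
  define \<sigma> where "\<sigma> = xs ! (k - 1) - 1"
  define c where "c = map d [0..<k - 1]"
  have d: "1 \<le> d i" "d i \<le> int n - \<sigma>" if "i < k - 1" for i
    using gaps[OF that] unfolding d_def \<sigma>_def by simp_all
  have "sum_list c = sum d {..<k - 1}"
    by (simp add: c_def interv_sum_list_conv_sum_set_nat atLeast0LessThan)
  moreover have sc: "sum_list c = \<sigma>"
    using sum_list_take_diffs[of "k - 1" xs] k first unfolding c_def d_def \<sigma>_def by simp
  ultimately have "int (k - 1) \<le> \<sigma>" "\<sigma> \<le> int (k - 1) * (int n - \<sigma>)"
    using sum_bounded_below[of "{..<k - 1}" 1 d] sum_bounded_above[of "{..<k - 1}" d "int n - \<sigma>"] d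
    by auto
  then have "int k - 1 \<le> \<sigma>" "\<sigma> \<le> sigma_max n k"
    using k by (simp_all add: le_sigma_max_iff of_nat_diff algebra_simps)
  then have "c @ [m_sigma n \<sigma>] \<in> G_tot n k"
    unfolding mem_G_tot_iff using sc d by (auto simp: c_def)
  moreover have "xs \<noteq> []"
    using k by auto
  then have "rep_vec (c @ [m_sigma n \<sigma>]) = xs"
    using rep_vec_diffs[OF _ first] k unfolding c_def d_def by simp
  ultimately show ?thesis
    by blast
qed

lemma G_tot_of_bounded_gaps:
  assumes k: "2 \<le> k" and B: "B \<subseteq> {1..int n}" "card B = k" "1 \<in> B"
    and gaps: "\<And>x y. x \<in> B \<Longrightarrow> y \<in> B \<Longrightarrow> x < y \<Longrightarrow> {x<..<y} \<inter> B = {}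
                 \<Longrightarrow> y - x \<le> int n + 1 - Max B"
  shows "\<exists>g\<in>G_tot n k. set (rep_vec g) = B"
proof -
  have fin: "finite B"
    using B(1) finite_subset by blast
  define xs where "xs = sorted_list_of_set B"
  have xs: "length xs = k" "set xs = B" "sorted_wrt (<) xs"
    using fin B(2) by (simp_all add: xs_def)
  have lt: "xs ! i < xs ! j" if "i < j" "j < k" for i j
    using xs that by (simp add: sorted_wrt_iff_nth_less)
  have le: "xs ! i \<le> xs ! j" if "i \<le> j" "j < k" for i j
    using lt[of i j] that by (cases "i = j") auto
  have mem: "xs ! i \<in> B" if "i < k" for i
    using xs that nth_mem by blast
  have ex: "\<exists>i<k. xs ! i = b" if "b \<in> B" for b
    using xs that by (metis in_set_conv_nth)
  have "B \<noteq> {}"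
    using B(3) by blast
  then have "xs ! 0 = Min B"
    using sorted_list_of_set_nonempty[OF fin] unfolding xs_def by simp
  moreover have "Min B = 1"
    using B(1,3) fin by (intro Min_eqI) auto
  ultimately have first: "xs ! 0 = 1"
    by simp
  have last: "xs ! (k - 1) = Max B"
  proof (rule antisym)
    show "xs ! (k - 1) \<le> Max B"
      using mem[of "k - 1"] fin k by simp
    obtain j where "j < k" "xs ! j = Max B"
      using ex[OF Max_in[OF fin \<open>B \<noteq> {}\<close>]] by blast
    then show "Max B \<le> xs ! (k - 1)"
      using le[of j "k - 1"] by simp
  qed
  have "1 \<le> xs ! Suc i - xs ! i \<and> xs ! Suc i - xs ! i \<le> int n + 1 - xs ! (k - 1)"
    if "i < k - 1" for i
  proof -
    have i: "Suc i < k"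
      using that by linarith
    have "z \<notin> {xs ! i<..<xs ! Suc i}" if "z \<in> B" for z
    proof -
      obtain j where "j < k" "xs ! j = z"
        using ex[OF \<open>z \<in> B\<close>] by blast
      then show ?thesis
        using le[of j i] le[of "Suc i" j] i by (cases "j \<le> i") auto
    qed
    then have "{xs ! i<..<xs ! Suc i} \<inter> B = {}"
      by blast
    then show ?thesis
      using gaps[OF mem[of i] mem[of "Suc i"] lt[of i "Suc i"]] lt[of i "Suc i"] i last by simp
  qed
  then obtain g where "g \<in> G_tot n k" "rep_vec g = xs"
    using G_tot_of_gap_list[OF k xs(1) first] by blast
  then show ?thesis
    using xs(2) by auto
qed

section \<open>Every rotation class is some C_g\<close>

lemma rot_to_1: "0 < n \<Longrightarrow> y \<in> A \<Longrightarrow> 1 \<in> rot n (1 - y) A"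
  unfolding rot_def using modn_id[of 1 n] by force

lemma max_minimal_rotation_gaps:
  assumes n: "0 < n" and B: "B \<subseteq> {1..int n}"
    and minimal: "\<And>t. 1 \<in> rot n t B \<Longrightarrow> Max B \<le> Max (rot n t B)"
    and xy: "x \<in> B" "y \<in> B" "x < y" "{x<..<y} \<inter> B = {}"
  shows "y - x \<le> int n + 1 - Max B"
proof -
  have fin: "finite (rot n (1 - y) B)"
    using B finite_subset unfolding rot_def by blast
  \<comment> \<open>rotating y to 1 moves the elements \<ge> y down by y - 1 and wraps those \<le> x around\<close>
  have bound: "b' \<le> int n + 1 - y + x" if b': "b' \<in> rot n (1 - y) B" for b'
  proof -
    obtain b where b: "b \<in> B" "b' = modn n (b + (1 - y))"
      using b' unfolding rot_def by blast
    have rng: "1 \<le> b" "b \<le> int n" "1 \<le> x" "1 \<le> y" "y \<le> int n"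
      using b(1) xy(1,2) B by auto
    show ?thesis
    proof (cases "y \<le> b")
      case True
      then have "b + (1 - y) \<in> {1..int n}"
        using rng by simp
      then have "b' = b + (1 - y)"
        using b(2) modn_id by simp
      then show ?thesis
        using rng by simp
    next
      case False
      then have "b \<notin> {x<..<y}"
        using xy(4) b(1) by blast
      then have "b \<le> x"
        using False by auto
      moreover have "modn n (b + (1 - y)) = modn n (b + (1 - y) + int n)"
        by (simp add: modn_eq_iff)
      moreover have "b + (1 - y) + int n \<in> {1..int n}"
        using rng xy(3) \<open>b \<le> x\<close> by simp
      ultimately have "b' = b + (1 - y) + int n"
        using b(2) modn_id by simp
      then show ?thesis
        using \<open>b \<le> x\<close> by simp
    qed
  qed
  have "Max B \<le> Max (rot n (1 - y) B)"
    using minimal rot_to_1[OF n xy(2)] .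
  also have "\<dots> \<le> int n + 1 - y + x"
    using bound fin rot_to_1[OF n xy(2)] by (subst Max_le_iff) auto
  finally show ?thesis
    by simp
qed

lemma exists_G_tot_Csets:
  assumes n: "0 < n" and k: "2 \<le> k" and A: "A \<in> hyperedges n k"
  shows "\<exists>g\<in>G_tot n k. A \<in> Csets n g"
proof -
  have A_sub: "A \<subseteq> {1..int n}" and "card A = k"
    using A unfolding hyperedges_def by auto
  then obtain a where "a \<in> A"
    using k by fastforce
  then obtain s where s: "1 \<in> rot n s A"
    and least: "\<And>t. 1 \<in> rot n t A \<Longrightarrow> nat (Max (rot n s A)) \<le> nat (Max (rot n t A))"
    using ex_has_least_nat[of "\<lambda>t. 1 \<in> rot n t A" "1 - a" "\<lambda>t. nat (Max (rot n t A))"]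
      rot_to_1[OF n] by blast
  define B where "B = rot n s A"
  have B: "B \<subseteq> {1..int n}" "card B = k" "1 \<in> B"
    using rot_hyperedges[OF n A] s unfolding B_def hyperedges_def by auto
  have minimal: "Max B \<le> Max (rot n t B)" if "1 \<in> rot n t B" for t
  proof -
    have fin: "finite (rot n t B)"
      using rot_subset[OF n] finite_subset by blast
    have "0 < Max (rot n t B)"
      using Max_ge[OF fin that] by simp
    then show ?thesis
      using least[of "s + t"] that unfolding B_def rot_rot by (simp add: nat_le_eq_zle)
  qed
  have "y - x \<le> int n + 1 - Max B"
    if "x \<in> B" "y \<in> B" "x < y" "{x<..<y} \<inter> B = {}" for x y
    using max_minimal_rotation_gaps[OF n B(1) minimal that] .
  then obtain g where g: "g \<in> G_tot n k" "set (rep_vec g) = B"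
    using G_tot_of_bounded_gaps[OF k B] by blast
  have "A = rot n (- s) B"
    unfolding B_def rot_rot using rot_0[OF A_sub] by simp
  then have "A \<in> rot_orbit n B"
    unfolding rot_orbit_eq_range[OF n] by blast
  then show ?thesis
    using g Csets_eq_rot_orbit by metis
qed

section \<open>The classes C_g and the cycles S_g\<close>

lemma G_tot_rep_vec_proper:
  assumes "g \<in> G_tot n k" "2 \<le> k" "k < n"
  shows "set (rep_vec g) \<subseteq> {1..int n}" "set (rep_vec g) \<noteq> {}" "set (rep_vec g) \<noteq> {1..int n}"
  using G_tot_rep_vec[OF assms(1,2)] assms(3) unfolding hyperedges_def by auto

lemma card_Csets:
  assumes "prime n" "g \<in> G_tot n k" "2 \<le> k" "k < n"
  shows "card (Csets n g) = n"
  unfolding Csets_eq_rot_orbit using card_rot_orbit[OF assms(1) G_tot_rep_vec_proper[OF assms(2-4)]] .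

lemma Csets_subset_hyperedges:
  assumes "0 < n" "g \<in> G_tot n k" "2 \<le> k"
  shows "Csets n g \<subseteq> hyperedges n k"
  unfolding Csets_eq_rot_orbit rot_orbit_eq_range[OF assms(1)]
  using rot_hyperedges[OF assms(1) G_tot_rep_vec(1)[OF assms(2,3)]] by blast

lemma Csets_eq_or_disjoint:
  "0 < n \<Longrightarrow> Csets n g = Csets n h \<or> Csets n g \<inter> Csets n h = {}"
  unfolding Csets_eq_rot_orbit by (rule rot_orbit_eq_or_disjoint)

lemma Union_Csets:
  assumes "0 < n" "2 \<le> k"
  shows "(\<Union>g\<in>G_tot n k. Csets n g) = hyperedges n k"
  using Csets_subset_hyperedges[OF assms(1) _ assms(2)] exists_G_tot_Csets[OF assms] by blast

lemma card_hyperedges: "card (hyperedges n k) = n choose k"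
  unfolding hyperedges_def using n_subsets[of "{1..int n}" k] by simp

lemma finite_hyperedges: "finite (hyperedges n k)"
  unfolding hyperedges_def by (rule finite_subset[of _ "Pow {1..int n}"]) auto

lemma card_Csets_image:
  assumes "prime n" "2 \<le> k" "k < n"
  shows "n * card (Csets n ` G_tot n k) = n choose k"
proof -
  have n: "0 < n"
    using assms(1) prime_gt_0_nat by blast
  have U: "\<Union>(Csets n ` G_tot n k) = hyperedges n k"
    using Union_Csets[OF n assms(2)] by simp
  then have "finite (Csets n ` G_tot n k)"
    using finite_hyperedges finite_UnionD by metis
  then have "n * card (Csets n ` G_tot n k) = card (\<Union>(Csets n ` G_tot n k))"
    using card_partition[of "Csets n ` G_tot n k" n] U finite_hyperedges
      card_Csets[OF assms(1) _ assms(2,3)] Csets_eq_or_disjoint[OF n] by fastforce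
  then show ?thesis
    using U card_hyperedges by simp
qed

lemma inj_on_cyc_E:
  assumes "prime n" "g \<in> G_tot n k" "2 \<le> k" "k < n"
  shows "inj_on (cyc_E n g) {0..<n}"
proof (rule inj_onI)
  fix p q assume "p \<in> {0..<n}" "q \<in> {0..<n}" "cyc_E n g p = cyc_E n g q"
  moreover have "\<not> int n dvd hd g"
    using G_tot_rep_vec(4,5)[OF assms(2,3)] by (simp add: zdvd_not_zless)
  ultimately show "p = q"
    using rot_eq_imp_dvd[OF assms(1) G_tot_rep_vec_proper[OF assms(2-4)]]
      dvd_mult_diff_imp_eq[OF assms(1)] unfolding cyc_E_eq_rot by simp
qed

lemma cyc_E_image:
  assumes "prime n" "g \<in> G_tot n k" "2 \<le> k" "k < n"
  shows "cyc_E n g ` {0..<n} = Csets n g"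
proof (rule card_subset_eq)
  have n: "0 < n"
    using assms(1) prime_gt_0_nat by blast
  show "finite (Csets n g)"
    using card_Csets[OF assms] n card_ge_0_finite by metis
  show "cyc_E n g ` {0..<n} \<subseteq> Csets n g"
    unfolding cyc_E_eq_rot Csets_eq_rot_orbit rot_orbit_eq_range[OF n] by blast
  show "card (cyc_E n g ` {0..<n}) = card (Csets n g)"
    using card_image[OF inj_on_cyc_E[OF assms]] card_Csets[OF assms] by simp
qed

lemma bij_betw_cyc_v:
  assumes "prime n" "g \<in> G_tot n k" "2 \<le> k"
  shows "bij_betw (cyc_v n g) {0..<n} {1..int n}"
proof -
  have n: "0 < n"
    using assms(1) prime_gt_0_nat by blast
  have "\<not> int n dvd hd g"
    using G_tot_rep_vec(4,5)[OF assms(2,3)] by (simp add: zdvd_not_zless)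
  then have inj: "inj_on (cyc_v n g) {0..<n}"
    using dvd_mult_diff_imp_eq[OF assms(1)]
    by (intro inj_onI) (simp add: cyc_v_def modn_eq_iff)
  moreover have "cyc_v n g ` {0..<n} \<subseteq> {1..int n}"
    unfolding cyc_v_def using modn_in_range[OF n] by blast
  ultimately have "cyc_v n g ` {0..<n} = {1..int n}"
    by (intro card_subset_eq) (simp_all add: card_image)
  then show ?thesis
    using inj unfolding bij_betw_def by blast
qed

lemma cyc_v_in_cyc_E:
  assumes "g \<in> G_tot n k" "2 \<le> k"
  shows "cyc_v n g i \<in> cyc_E n g i" "cyc_v n g ((i + 1) mod n) \<in> cyc_E n g i"
proof -
  have R: "1 \<in> set (rep_vec g)" "1 + hd g \<in> set (rep_vec g)"
    using G_tot_rep_vec(2,3)[OF assms] by blast+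
  show "cyc_v n g i \<in> cyc_E n g i"
    using R(1) unfolding cyc_v_def cyc_E_eq_rot rot_def by force
  have "int n dvd int ((i + 1) mod n) - int (i + 1)"
    by (simp add: zmod_int flip: mod_eq_dvd_iff)
  then have "int n dvd (int ((i + 1) mod n) - int (i + 1)) * hd g"
    by (rule dvd_mult2)
  moreover have "(int ((i + 1) mod n) - int (i + 1)) * hd g
                 = (1 + int ((i + 1) mod n) * hd g) - ((1 + hd g) + int i * hd g)"
    by (simp add: algebra_simps)
  ultimately have "int n dvd (1 + int ((i + 1) mod n) * hd g) - ((1 + hd g) + int i * hd g)"
    by simp
  then have "cyc_v n g ((i + 1) mod n) = modn n ((1 + hd g) + int i * hd g)"
    unfolding cyc_v_def modn_eq_iff .
  then show "cyc_v n g ((i + 1) mod n) \<in> cyc_E n g i"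
    using R(2) unfolding cyc_E_eq_rot rot_def by force
qed

lemma berge_ham_cycle_cyc:
  assumes "prime n" "g \<in> G_tot n k" "2 \<le> k" "k < n"
  shows "berge_ham_cycle n k (cyc_v n g) (cyc_E n g)"
proof -
  have n: "0 < n"
    using assms(1) prime_gt_0_nat by blast
  have "cyc_E n g i \<in> hyperedges n k" for i
    unfolding cyc_E_eq_rot using rot_hyperedges[OF n G_tot_rep_vec(1)[OF assms(2,3)]] .
  then show ?thesis
    unfolding berge_ham_cycle_def
    using bij_betw_cyc_v[OF assms(1-3)] inj_on_cyc_E[OF assms] cyc_v_in_cyc_E[OF assms(2,3)]
    by blast
qed

lemma cycles_ham_decomposition:
  assumes "prime n" "2 \<le> k" "k < n"
  shows "\<forall>gs :: nat \<Rightarrow> int list.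
           (\<forall>i < card (Csets n ` G_tot n k). gs i \<in> G_tot n k) \<and>
           inj_on (\<lambda>i. Csets n (gs i)) {..< card (Csets n ` G_tot n k)} \<longrightarrow>
             (\<forall>i < card (Csets n ` G_tot n k). berge_ham_cycle n k (cyc_v n (gs i)) (cyc_E n (gs i)))
           \<and> (\<forall>i < card (Csets n ` G_tot n k). \<forall>j < card (Csets n ` G_tot n k). i \<noteq> j \<longrightarrow>
                cyc_E n (gs i) ` {0..<n} \<inter> cyc_E n (gs j) ` {0..<n} = {})
           \<and> (\<Union>i < card (Csets n ` G_tot n k). cyc_E n (gs i) ` {0..<n}) = hyperedges n k"
proof (intro allI impI, elim conjE)
  let ?N = "card (Csets n ` G_tot n k)"
  fix gs :: "nat \<Rightarrow> int list"
  assume gs: "\<forall>i < ?N. gs i \<in> G_tot n k" and inj: "inj_on (\<lambda>i. Csets n (gs i)) {..<?N}"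
  have n: "0 < n"
    using assms(1) prime_gt_0_nat by blast
  have E: "cyc_E n (gs i) ` {0..<n} = Csets n (gs i)" if "i < ?N" for i
    using cyc_E_image[OF assms(1) _ assms(2,3)] gs that by blast
  have "finite (Csets n ` G_tot n k)"
    by (metis Union_Csets[OF n assms(2)] finite_UnionD finite_hyperedges)
  then have "(\<lambda>i. Csets n (gs i)) ` {..<?N} = Csets n ` G_tot n k"
    using gs inj by (intro card_subset_eq) (auto simp: card_image)
  then have "(\<Union>i<?N. Csets n (gs i)) = hyperedges n k"
    using Union_Csets[OF n assms(2)] by simp
  moreover have "(\<Union>i<?N. cyc_E n (gs i) ` {0..<n}) = (\<Union>i<?N. Csets n (gs i))"
    using E by (intro SUP_cong) simp_all
  ultimately have union: "(\<Union>i<?N. cyc_E n (gs i) ` {0..<n}) = hyperedges n k"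
    by simp
  have disjoint: "cyc_E n (gs i) ` {0..<n} \<inter> cyc_E n (gs j) ` {0..<n} = {}"
    if "i < ?N" "j < ?N" "i \<noteq> j" for i j
    using Csets_eq_or_disjoint[OF n, of "gs i" "gs j"] inj_onD[OF inj, of i j] E that by auto
  have "berge_ham_cycle n k (cyc_v n (gs i)) (cyc_E n (gs i))" if "i < ?N" for i
    using berge_ham_cycle_cyc[OF assms(1) _ assms(2,3)] gs that by blast
  then show "(\<forall>i<?N. berge_ham_cycle n k (cyc_v n (gs i)) (cyc_E n (gs i)))
      \<and> (\<forall>i<?N. \<forall>j<?N. i \<noteq> j \<longrightarrow> cyc_E n (gs i) ` {0..<n} \<inter> cyc_E n (gs j) ` {0..<n} = {})
      \<and> (\<Union>i<?N. cyc_E n (gs i) ` {0..<n}) = hyperedges n k"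
    using disjoint union by blast
qed

theorem theorem1:
  fixes n k :: nat
  assumes "prime n" and "2 \<le> k" and "2 * k < n"
  shows "real (card (Csets n ` G_tot n k)) = real (n choose k) / real n
       \<and> (\<forall>g \<in> G_tot n k. \<forall>h \<in> G_tot n k. Csets n g = Csets n h \<or> Csets n g \<inter> Csets n h = {})
       \<and> (\<Union>g \<in> G_tot n k. Csets n g) = hyperedges n k
       \<and> (\<forall>gs :: nat \<Rightarrow> int list.
            (\<forall>i < (n choose k) div n. gs i \<in> G_tot n k) \<and>
            inj_on (\<lambda>i. Csets n (gs i)) {..< (n choose k) div n} \<longrightarrow>
              (\<forall>i < (n choose k) div n. berge_ham_cycle n k (cyc_v n (gs i)) (cyc_E n (gs i)))
            \<and> (\<forall>i < (n choose k) div n. \<forall>j < (n choose k) div n. i \<noteq> j \<longrightarrow>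
                 cyc_E n (gs i) ` {0..<n} \<inter> cyc_E n (gs j) ` {0..<n} = {})
            \<and> (\<Union>i < (n choose k) div n. cyc_E n (gs i) ` {0..<n}) = hyperedges n k)"
proof -
  \<comment> \<open>of the hypothesis 2 k < n only k < n is needed\<close>
  have n: "0 < n" and k: "k < n"
    using assms prime_gt_0_nat by auto
  have count: "n * card (Csets n ` G_tot n k) = n choose k"
    using card_Csets_image[OF assms(1,2) k] .
  then have N: "(n choose k) div n = card (Csets n ` G_tot n k)"
    using n by (metis nonzero_mult_div_cancel_left not_less0 neq0_conv)
  have "real (n choose k) = real n * real (card (Csets n ` G_tot n k))"
    by (simp flip: count)
  then have "real (card (Csets n ` G_tot n k)) = real (n choose k) / real n"
    using n by simp
  moreover have "\<forall>g \<in> G_tot n k. \<forall>h \<in> G_tot n k. Csets n g = Csets n h \<or> Csets n g \<inter> Csets n h = {}"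
    using Csets_eq_or_disjoint[OF n] by blast
  ultimately show ?thesis
    unfolding N using Union_Csets[OF n assms(2)] cycles_ham_decomposition[OF assms(1,2) k] by blast
qed

end
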